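(* Let $\mathcal{T}$ be a finite tree, $w:V(\mathcal{T})\to\mathbb{R}_{\ge0}$, $m=w(\mathcal{T})$, and let $C$ be a centroid tree of $(\mathcal{T},w)$ with $\mathtt{cost}_w(C)=\mathtt{cent}(\mathcal{T},w)$. Let $p\ge0$ and let $v_0,v_1,\dots,v_p$ be vertices such that $v_0$ is the root of $C$ and $v_i$ is a child of $v_{i-1}$ in $C$ for $1\le i\le p$; let $P=\{v_0,\dots,v_p\}$. Then $$\mathtt{cent}(\mathcal{T},w)\le\left(2-\frac1{2^p}\right)m+\sum_{\mathcal{H}\in\mathbb{C}(\mathcal{T}-P)}\mathtt{cent}(\mathcal{H},w).$$
   Context: $\mathbb{C}(G)$ denotes the set of connected components of a graph $G$, and $\mathcal{T}-P$ is the subgraph induced by $V(\mathcal{T})\setminus P$. For a subgraph $\mathcal{H}$, $w(\mathcal{H})=\sum_{x\in V(\mathcal{H})}w(x)$, and $w$ also denotes its restriction to $V(\mathcal{H})$. A search tree on a tree $\mathcal{T}$ is a rooted tree $T$ with vertex set $V(\mathcal{T})$ defined recursively: its root is an arbitrary vertex $r$, and the children of $r$ are the roots of search trees built on the connected components of $\mathcal{T}-r$; a single-vertex tree has only itself as search tree. $\mathtt{cost}_w(T)=\sum_x w(x)\,\mathtt{depth}_T(x)$ with root depth $1$. A vertex $v$ is a centroid of $(\mathcal{T},w)$ if each component $\mathcal{H}$ of $\mathcal{T}-v$ has $w(\mathcal{H})\le w(\mathcal{T})/2$. A search tree $T$ is a centroid tree if each vertex $x$ is a centroid of $(\mathcal{T}[V(T_x)],w)$,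 $T_x$ being the subtree of $T$ rooted at $x$. $\mathtt{cent}(\mathcal{T},w)$ is the maximum cost of a centroid tree of $(\mathcal{T},w)$. *)

theory Defs
  imports Complex_Main
begin

text \<open>A graph is a vertex set S together with the (global) edge relation E;
  the induced subgraph on a subset S' is simply (S', E).\<close>

definition edges_in :: "('a \<Rightarrow> 'a \<Rightarrow> bool) \<Rightarrow> 'a set \<Rightarrow> ('a \<times> 'a) set" where
  "edges_in E S = {(a, b). a \<in> S \<and> b \<in> S \<and> E a b}"

definition reach :: "('a \<Rightarrow> 'a \<Rightarrow> bool) \<Rightarrow> 'a set \<Rightarrow> 'a \<Rightarrow> 'a \<Rightarrow> bool" where
  "reach E S x y \<longleftrightarrow> x \<in> S \<and> (x, y) \<in> (edges_in E S)\<^sup>*"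

definition comps :: "('a \<Rightarrow> 'a \<Rightarrow> bool) \<Rightarrow> 'a set \<Rightarrow> 'a set set" where
  "comps E S = {{y. reach E S x y} | x. x \<in> S}"

definition connected_graph :: "('a \<Rightarrow> 'a \<Rightarrow> bool) \<Rightarrow> 'a set \<Rightarrow> bool" where
  "connected_graph E S \<longleftrightarrow> S \<noteq> {} \<and> (\<forall>x\<in>S. \<forall>y\<in>S. reach E S x y)"

definition has_cycle :: "('a \<Rightarrow> 'a \<Rightarrow> bool) \<Rightarrow> 'a set \<Rightarrow> bool" where
  "has_cycle E S \<longleftrightarrow> (\<exists>xs. length xs \<ge> 3 \<and> distinct xs \<and> set xs \<subseteq> S \<and>
      (\<forall>i. Suc i < length xs \<longrightarrow> E (xs ! i) (xs ! Suc i)) \<and> E (last xs) (hd xs))"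

definition is_tree :: "('a \<Rightarrow> 'a \<Rightarrow> bool) \<Rightarrow> 'a set \<Rightarrow> bool" where
  "is_tree E V \<longleftrightarrow> finite V \<and> (\<forall>x\<in>V. \<forall>y\<in>V. E x y \<longleftrightarrow> E y x) \<and> (\<forall>x\<in>V. \<not> E x x)
     \<and> connected_graph E V \<and> \<not> has_cycle E V"

datatype 'a rtree = Node 'a "'a rtree list"

fun root :: "'a rtree \<Rightarrow> 'a" where
  "root (Node r ts) = r"

fun children :: "'a rtree \<Rightarrow> 'a rtree list" where
  "children (Node r ts) = ts"

fun verts :: "'a rtree \<Rightarrow> 'a set" where
  "verts (Node r ts) = insert r (\<Union>t\<in>set ts. verts t)"

fun subtrees :: "'a rtree \<Rightarrow> 'a rtree list" where
  "subtrees (Node r ts) = Node r ts # concat (map subtrees ts)"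

inductive search_tree :: "('a \<Rightarrow> 'a \<Rightarrow> bool) \<Rightarrow> 'a set \<Rightarrow> 'a rtree \<Rightarrow> bool" where
  "\<lbrakk> r \<in> S; distinct (map verts ts); set (map verts ts) = comps E (S - {r});
     \<forall>t\<in>set ts. search_tree E (verts t) t \<rbrakk> \<Longrightarrow> search_tree E S (Node r ts)"

text \<open>depth_T(x) = number of vertices on the root-to-x path = number of subtrees
  containing x (root has depth 1).\<close>
definition depth :: "'a rtree \<Rightarrow> 'a \<Rightarrow> nat" where
  "depth t x = length (filter (\<lambda>s. x \<in> verts s) (subtrees t))"

definition cost :: "('a \<Rightarrow> real) \<Rightarrow> 'a rtree \<Rightarrow> real" where
  "cost w t = (\<Sum>x\<in>verts t. w x * real (depth t x))"

definition child_of :: "'a rtree \<Rightarrow> 'a \<Rightarrow> 'a \<Rightarrow> bool" where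
  "child_of t x y \<longleftrightarrow> (\<exists>s\<in>set (subtrees t). root s = x \<and> y \<in> root ` set (children s))"

definition is_centroid :: "('a \<Rightarrow> 'a \<Rightarrow> bool) \<Rightarrow> 'a set \<Rightarrow> ('a \<Rightarrow> real) \<Rightarrow> 'a \<Rightarrow> bool" where
  "is_centroid E S w v \<longleftrightarrow> v \<in> S \<and>
     (\<forall>H\<in>comps E (S - {v}). sum w H \<le> sum w S / 2)"

definition centroid_tree :: "('a \<Rightarrow> 'a \<Rightarrow> bool) \<Rightarrow> 'a set \<Rightarrow> ('a \<Rightarrow> real) \<Rightarrow> 'a rtree \<Rightarrow> bool" where
  "centroid_tree E S w t \<longleftrightarrow> search_tree E S t \<and>
     (\<forall>s\<in>set (subtrees t). is_centroid E (verts s) w (root s))"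

definition cent :: "('a \<Rightarrow> 'a \<Rightarrow> bool) \<Rightarrow> 'a set \<Rightarrow> ('a \<Rightarrow> real) \<Rightarrow> real" where
  "cent E S w = Max {cost w t | t. centroid_tree E S w t}"

end

theory Submission
  imports Defs
begin

text \<open>Induction on p. Let r be the root of C and S its vertex set, and let t be the child of r
  with root v1; t is a centroid tree of a component X of S - r. The cost of C is w(S) plus the costs
  of the children of r, and every child other than t costs at most the cent of its own component.
  Removing P from S splits only X, into the components of X - {v1, ..., vp}, so the induction
  hypothesis for t leaves w(S) + (2 - 2 / 2^p) w(X) to be bounded; as r is a centroid,
  w(X) <= w(S) / 2, which gives (2 - 1 / 2^p) w(S).\<close>

section \<open>Rooted trees and their cost\<close>

lemma finite_verts: "finite (verts t)"
  by (induction t) auto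

lemma root_in_verts: "root t \<in> verts t"
  by (cases t) auto

lemma verts_subtree: "s \<in> set (subtrees t) \<Longrightarrow> verts s \<subseteq> verts t"
  by (induction t arbitrary: s) fastforce

lemma sum_weight_times_multiplicity:
  assumes "finite A" "\<forall>s\<in>set L. verts s \<subseteq> A"
  shows "(\<Sum>x\<in>A. w x * real (length (filter (\<lambda>s. x \<in> verts s) L)))
       = (\<Sum>s\<leftarrow>L. sum w (verts s))"
  using assms(2)
proof (induction L)
  case Nil
  then show ?case by simp
next
  case (Cons s L)
  have "(\<Sum>x\<in>A. w x * real (length (filter (\<lambda>s. x \<in> verts s) (s # L))))
      = (\<Sum>x\<in>A. if x \<in> verts s then w x else 0)
        + (\<Sum>x\<in>A. w x * real (length (filter (\<lambda>s. x \<in> verts s) L)))"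
    by (auto simp add: sum.distrib[symmetric] algebra_simps intro!: sum.cong)
  also have "(\<Sum>x\<in>A. if x \<in> verts s then w x else 0) = sum w (verts s)"
    using Cons.prems assms(1) by (simp add: sum.If_cases Int_absorb1 Int_commute)
  finally show ?case using Cons by simp
qed

lemma cost_eq_sum_subtrees: "cost w t = (\<Sum>s\<leftarrow>subtrees t. sum w (verts s))"
  unfolding cost_def depth_def
  by (rule sum_weight_times_multiplicity) (auto simp: finite_verts verts_subtree)

lemma cost_Node: "cost w (Node r ts) = sum w (verts (Node r ts)) + (\<Sum>t\<leftarrow>ts. cost w t)"
  unfolding cost_eq_sum_subtrees by (induction ts) auto

lemma child_of_verts: "child_of t x y \<Longrightarrow> y \<in> verts t"
proof -
  assume "child_of t x y"
  then obtain s c where "s \<in> set (subtrees t)" "c \<in> set (children s)" "y = root c"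
    unfolding child_of_def by blast
  moreover from this(2) have "root c \<in> verts s"
    using root_in_verts by (cases s) auto
  ultimately show ?thesis using verts_subtree by blast
qed

section \<open>Connected components\<close>

lemma reach_imp_mem: "reach E A x y \<Longrightarrow> y \<in> A"
  unfolding reach_def
proof (elim conjE)
  assume "x \<in> A" "(x, y) \<in> (edges_in E A)\<^sup>*"
  from this(2) show "y \<in> A"
    by (induction rule: rtrancl_induct) (use \<open>x \<in> A\<close> in \<open>auto simp: edges_in_def\<close>)
qed

lemma comps_subset: "X \<in> comps E A \<Longrightarrow> X \<subseteq> A"
  by (auto simp: comps_def dest: reach_imp_mem)

lemma comps_nonempty: "X \<in> comps E A \<Longrightarrow> X \<noteq> {}"
  by (auto simp: comps_def reach_def)

lemma Union_comps: "\<Union> (comps E A) = A"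
proof
  show "\<Union> (comps E A) \<subseteq> A" using comps_subset by blast
  show "A \<subseteq> \<Union> (comps E A)"
  proof
    fix x assume "x \<in> A"
    then have "x \<in> {y. reach E A x y}" "{y. reach E A x y} \<in> comps E A"
      by (auto simp: reach_def comps_def)
    then show "x \<in> \<Union> (comps E A)" by blast
  qed
qed

lemma finite_comps: "finite A \<Longrightarrow> finite (comps E A)"
  by (rule finite_subset[of _ "Pow A"]) (auto dest: comps_subset)

lemma comps_closed:
  assumes "X \<in> comps E A" "x \<in> X" "y \<in> A" "E x y"
  shows "y \<in> X"
proof -
  obtain z where X: "X = {y. reach E A z y}" using assms(1) unfolding comps_def by blast
  have "x \<in> A" using assms(1,2) comps_subset by blast
  then have "(x, y) \<in> edges_in E A" using assms(3,4) by (simp add: edges_in_def)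
  moreover have "z \<in> A" "(z, x) \<in> (edges_in E A)\<^sup>*" using assms(2) X by (simp_all add: reach_def)
  ultimately have "reach E A z y" unfolding reach_def by (meson rtrancl_into_rtrancl)
  then show ?thesis using X by blast
qed

lemma comps_connected:
  assumes "symp_on A E" "X \<in> comps E A"
  shows "connected_graph E X"
proof -
  obtain z where "z \<in> A" and X: "X = {y. reach E A z y}"
    using assms(2) unfolding comps_def by blast
  have XA: "X \<subseteq> A" using assms(2) by (rule comps_subset)
  have from_z: "(z, y) \<in> (edges_in E X)\<^sup>*" if "y \<in> X" for y
  proof -
    from that X have "(z, y) \<in> (edges_in E A)\<^sup>*" by (simp add: reach_def)
    then show ?thesis
    proof (induction rule: rtrancl_induct)
      case (step y y')
      have "y \<in> X" "y' \<in> X"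
        using step(1,2) \<open>z \<in> A\<close> X by (auto simp: reach_def intro: rtrancl_into_rtrancl)
      then have "(y, y') \<in> edges_in E X" using step(2) by (simp add: edges_in_def)
      then show ?case by (rule rtrancl_into_rtrancl[OF step(3)])
    qed simp
  qed
  have "(edges_in E X)\<inverse> = edges_in E X"
    using XA assms(1) by (auto simp: edges_in_def dest: symp_onD)
  then have "(x, y) \<in> (edges_in E X)\<^sup>*" if "x \<in> X" "y \<in> X" for x y
    using from_z[OF that(1)] from_z[OF that(2)]
    by (metis rtrancl_converseI rtrancl_trans)
  then show ?thesis
    using comps_nonempty[OF assms(2)] by (auto simp: connected_graph_def reach_def)
qed

lemma connected_subset_closed:
  assumes "connected_graph E X" "X \<subseteq> B" "\<forall>y\<in>Y. \<forall>z\<in>B. E y z \<longrightarrow> z \<in> Y" "x \<in> X" "x \<in> Y"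
  shows "X \<subseteq> Y"
proof
  fix y assume "y \<in> X"
  then have "(x, y) \<in> (edges_in E X)\<^sup>*"
    using assms(1,4) by (simp add: connected_graph_def reach_def)
  then show "y \<in> Y"
    by (induction rule: rtrancl_induct) (use assms in \<open>auto simp: edges_in_def\<close>)
qed

lemma connected_closed_in_comps:
  assumes "connected_graph E X" "X \<subseteq> A" "\<forall>x\<in>X. \<forall>y\<in>A. E x y \<longrightarrow> y \<in> X"
  shows "X \<in> comps E A"
proof -
  obtain z where z: "z \<in> X" using assms(1) by (auto simp: connected_graph_def)
  have "X = {y. reach E A z y}"
  proof (intro equalityI subsetI CollectI)
    fix y assume "y \<in> X"
    then have "(z, y) \<in> (edges_in E X)\<^sup>*"
      using assms(1) z by (simp add: connected_graph_def reach_def)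
    then have "(z, y) \<in> (edges_in E A)\<^sup>*"
      using rtrancl_mono[of "edges_in E X" "edges_in E A"] assms(2)
      by (auto simp: edges_in_def)
    then show "reach E A z y" using z assms(2) by (auto simp: reach_def)
  next
    fix y assume "y \<in> {y. reach E A z y}"
    then have "(z, y) \<in> (edges_in E A)\<^sup>*" by (simp add: reach_def)
    then show "y \<in> X"
      by (induction rule: rtrancl_induct) (use z assms(3) in \<open>auto simp: edges_in_def\<close>)
  qed
  then show ?thesis using z assms(2) unfolding comps_def by blast
qed

lemma comps_eqI:
  assumes "symp_on A E" "X \<in> comps E A" "Y \<in> comps E A" "x \<in> X" "x \<in> Y"
  shows "X = Y"
proof
  show "X \<subseteq> Y"
    using connected_subset_closed[OF comps_connected[OF assms(1,2)] comps_subset[OF assms(2)]]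
      comps_closed[OF assms(3)] assms(4,5) by blast
  show "Y \<subseteq> X"
    using connected_subset_closed[OF comps_connected[OF assms(1,3)] comps_subset[OF assms(3)]]
      comps_closed[OF assms(2)] assms(4,5) by blast
qed

lemma comps_Diff_subset_component:
  assumes sym: "symp_on A E" and X: "X \<in> comps E A" and "P \<subseteq> X"
  shows "comps E (A - P) = comps E (X - P) \<union> (comps E A - {X})"
proof -
  have XA: "X \<subseteq> A" using X by (rule comps_subset)
  have symAP: "symp_on (A - P) E" and symXP: "symp_on (X - P) E"
    using sym XA by (auto intro: symp_on_subset)
  have other: "Z \<inter> X = {}" if "Z \<in> comps E A - {X}" for Z
    using comps_eqI[OF sym _ X] that by blast
  have "Y \<in> comps E (X - P) \<union> (comps E A - {X})" if Y: "Y \<in> comps E (A - P)" for Y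
  proof -
    obtain y where "y \<in> Y" using comps_nonempty[OF Y] by blast
    have YAP: "Y \<subseteq> A - P" using Y by (rule comps_subset)
    then obtain Z where Z: "Z \<in> comps E A" "y \<in> Z"
      using Union_comps[of E A] \<open>y \<in> Y\<close> by blast
    have connY: "connected_graph E Y" using symAP Y by (rule comps_connected)
    show ?thesis
    proof (cases "Z = X")
      case True
      have "Y \<subseteq> X"
        by (rule connected_subset_closed[OF connY])
          (use YAP comps_closed[OF X] True Z \<open>y \<in> Y\<close> in blast)+
      then have "Y \<in> comps E (X - P)"
        using YAP XA comps_closed[OF Y] by (intro connected_closed_in_comps[OF connY]) blast+
      then show ?thesis by blast
    next
      case False
      have "Z \<in> comps E (A - P)"
        by (rule connected_closed_in_comps[OF comps_connected[OF sym Z(1)]])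
          (use comps_subset[OF Z(1)] comps_closed[OF Z(1)] other[of Z] False Z \<open>P \<subseteq> X\<close> in blast)+
      then have "Y = Z" using comps_eqI[OF symAP Y _ \<open>y \<in> Y\<close> Z(2)] by blast
      then show ?thesis using Z False by blast
    qed
  qed
  moreover have "Y \<in> comps E (A - P)" if Y: "Y \<in> comps E (X - P)" for Y
  proof (rule connected_closed_in_comps[OF comps_connected[OF symXP Y]])
    have YXP: "Y \<subseteq> X - P" using Y by (rule comps_subset)
    then show "Y \<subseteq> A - P" using XA by blast
    show "\<forall>x\<in>Y. \<forall>y\<in>A - P. E x y \<longrightarrow> y \<in> Y"
      using comps_closed[OF X] comps_closed[OF Y] YXP by blast
  qed
  moreover have "Y \<in> comps E (A - P)" if Y: "Y \<in> comps E A - {X}" for Y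
    by (rule connected_closed_in_comps[OF comps_connected[OF sym]])
      (use Y comps_subset[of Y E A] comps_closed[of Y E A] other[OF Y] \<open>P \<subseteq> X\<close> in blast)+
  ultimately show ?thesis by blast
qed

lemma sum_comps_Diff_subset_component:
  assumes "finite A" "symp_on A E" "X \<in> comps E A" "P \<subseteq> X"
  shows "(\<Sum>H\<in>comps E (A - P). f H) = (\<Sum>H\<in>comps E (X - P). f H) + (\<Sum>H\<in>comps E A - {X}. f H)"
proof -
  have XA: "X \<subseteq> A" using assms(3) by (rule comps_subset)
  have "comps E (X - P) \<inter> (comps E A - {X}) = {}"
    using comps_subset comps_nonempty comps_eqI[OF assms(2) _ assms(3)] by blast
  then show ?thesis
    unfolding comps_Diff_subset_component[OF assms(2-4)]
    using assms(1) XA by (intro sum.union_disjoint) (auto intro: finite_comps finite_subset)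
qed

section \<open>Search trees and centroid trees\<close>

lemma search_treeE:
  assumes "search_tree E S t"
  obtains r ts where "t = Node r ts" "r \<in> S" "distinct (map verts ts)"
    "verts ` set ts = comps E (S - {r})" "\<forall>t\<in>set ts. search_tree E (verts t) t"
  using assms by (cases rule: search_tree.cases) auto

lemma search_tree_NodeD:
  assumes "search_tree E S (Node r ts)"
  shows "r \<in> S" "distinct (map verts ts)" "verts ` set ts = comps E (S - {r})"
    "\<forall>t\<in>set ts. search_tree E (verts t) t"
  using assms by (cases rule: search_tree.cases; simp)+

lemma search_tree_verts: "search_tree E S t \<Longrightarrow> verts t = S"
  by (elim search_treeE) (use Union_comps[of E] in auto)

lemma centroid_tree_child:
  assumes "centroid_tree E S w (Node r ts)" "t \<in> set ts"
  shows "centroid_tree E (verts t) w t"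
proof -
  have "search_tree E S (Node r ts)" using assms(1) unfolding centroid_tree_def by blast
  with assms(2) have "search_tree E (verts t) t" by (auto dest: search_tree_NodeD(4))
  then show ?thesis using assms unfolding centroid_tree_def by auto
qed

lemma finite_search_trees: "finite S \<Longrightarrow> finite {t. search_tree E S t}"
proof (induction "card S" arbitrary: S rule: less_induct)
  case less
  define F where "F = (\<Union>B\<in>Pow S - {S}. {t. search_tree E B t})"
  have "finite F"
    unfolding F_def
  proof (rule finite_UN_I)
    show "finite (Pow S - {S})" using less.prems by simp
    fix B assume "B \<in> Pow S - {S}"
    then have "B \<subset> S" by blast
    then show "finite {t. search_tree E B t}"
      using less.hyps less.prems psubset_card_mono finite_subset by (metis psubset_imp_subset)
  qed
  have "{t. search_tree E S t}
        \<subseteq> (\<lambda>(r, ts). Node r ts) ` (S \<times> {ts. set ts \<subseteq> F \<and> length ts \<le> card (Pow S)})"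
  proof
    fix t assume "t \<in> {t. search_tree E S t}"
    then have "search_tree E S t" by simp
    then obtain r ts where t: "t = Node r ts" "r \<in> S" "distinct (map verts ts)"
      "verts ` set ts = comps E (S - {r})" "\<forall>t\<in>set ts. search_tree E (verts t) t"
      by (rule search_treeE)
    have children_verts: "verts ` set ts \<subseteq> Pow (S - {r})"
      unfolding t(4) by (auto dest: comps_subset)
    have "set ts \<subseteq> F"
    proof
      fix t' assume "t' \<in> set ts"
      then have "verts t' \<in> Pow S - {S}" using children_verts t(2) by blast
      then show "t' \<in> F" unfolding F_def using t(5) \<open>t' \<in> set ts\<close> by blast
    qed
    moreover have "length ts \<le> card (Pow S)"
    proof -
      have "length ts = card (verts ` set ts)"
        using distinct_card[OF t(3)] by simp
      also have "\<dots> \<le> card (Pow S)"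
        using children_verts less.prems by (intro card_mono) auto
      finally show ?thesis .
    qed
    ultimately show "t \<in> (\<lambda>(r, ts). Node r ts) ` (S \<times> {ts. set ts \<subseteq> F \<and> length ts \<le> card (Pow S)})"
      using t by auto
  qed
  moreover have "finite (S \<times> {ts. set ts \<subseteq> F \<and> length ts \<le> card (Pow S)})"
    using less.prems \<open>finite F\<close> finite_lists_length_le by blast
  ultimately show ?case by (meson finite_imageI finite_subset)
qed

lemma cost_le_cent:
  assumes "centroid_tree E S w t"
  shows "cost w t \<le> cent E S w"
proof -
  have "finite S" using assms search_tree_verts finite_verts
    unfolding centroid_tree_def by metis
  have "{cost w t | t. centroid_tree E S w t} \<subseteq> cost w ` {t. search_tree E S t}"
    unfolding centroid_tree_def by auto
  then have "finite {cost w t | t. centroid_tree E S w t}"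
    using finite_search_trees[OF \<open>finite S\<close>] finite_subset by blast
  then show ?thesis unfolding cent_def using assms by (intro Max_ge) auto
qed

lemma cost_search_tree_Node:
  assumes "search_tree E S (Node r ts)"
  shows "cost w (Node r ts) = sum w S + (\<Sum>t\<in>set ts. cost w t)"
proof -
  have "distinct ts" using search_tree_NodeD(2)[OF assms] by (simp add: distinct_map)
  then show ?thesis
    using cost_Node[of w r ts] search_tree_verts[OF assms]
    by (simp add: sum_list_distinct_conv_sum_set)
qed

lemma sum_cost_children_le:
  assumes "centroid_tree E S w (Node r ts)" "T \<subseteq> set ts"
  shows "(\<Sum>t\<in>T. cost w t) \<le> (\<Sum>H\<in>verts ` T. cent E H w)"
proof -
  have "search_tree E S (Node r ts)" using assms(1) unfolding centroid_tree_def by blast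
  then have "inj_on verts (set ts)" by (auto dest: search_tree_NodeD(2) simp: distinct_map)
  then have "(\<Sum>H\<in>verts ` T. cent E H w) = (\<Sum>t\<in>T. cent E (verts t) w)"
    using assms(2) by (simp add: sum.reindex inj_on_subset)
  also have "(\<Sum>t\<in>T. cost w t) \<le> \<dots>"
  proof (rule sum_mono)
    fix t assume "t \<in> T"
    with assms(2) have "t \<in> set ts" by blast
    then have "centroid_tree E (verts t) w t" by (rule centroid_tree_child[OF assms(1)])
    then show "cost w t \<le> cent E (verts t) w" by (rule cost_le_cent)
  qed
  finally show ?thesis .
qed

lemma centroid_tree_comps_weight_le:
  assumes "centroid_tree E S w (Node r ts)" "X \<in> comps E (S - {r})"
  shows "sum w X \<le> sum w S / 2"
proof -
  have "search_tree E S (Node r ts)" using assms(1) unfolding centroid_tree_def by blast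
  then have "is_centroid E S w r"
    using assms(1) search_tree_verts unfolding centroid_tree_def by fastforce
  then show ?thesis using assms(2) unfolding is_centroid_def by blast
qed

lemma cost_Node_le:
  assumes "centroid_tree E S w (Node r ts)" "t \<in> set ts"
  shows "cost w (Node r ts)
           \<le> sum w S + cost w t + (\<Sum>H\<in>comps E (S - {r}) - {verts t}. cent E H w)"
proof -
  have st: "search_tree E S (Node r ts)" using assms(1) unfolding centroid_tree_def by blast
  have "verts ` (set ts - {t}) = comps E (S - {r}) - {verts t}"
    using inj_on_image_set_diff[of verts "set ts" "set ts" "{t}"] search_tree_NodeD(2,3)[OF st]
      assms(2) by (simp add: distinct_map)
  moreover have "cost w (Node r ts) = sum w S + cost w t + (\<Sum>t'\<in>set ts - {t}. cost w t')"
    using cost_search_tree_Node[OF st] sum.remove[OF _ assms(2)] by simp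
  ultimately show ?thesis using sum_cost_children_le[OF assms(1), of "set ts - {t}"] by simp
qed

section \<open>Descending along a path of the search tree\<close>

lemma child_of_root:
  assumes "search_tree E S (Node r ts)" "child_of (Node r ts) r y"
  shows "\<exists>t\<in>set ts. root t = y"
proof -
  obtain s where s: "s \<in> set (subtrees (Node r ts))" "root s = r" "y \<in> root ` set (children s)"
    using assms(2) unfolding child_of_def by blast
  have "s = Node r ts"
  proof (rule ccontr)
    assume "s \<noteq> Node r ts"
    then obtain t where t: "t \<in> set ts" "s \<in> set (subtrees t)" using s(1) by auto
    then have "r \<in> verts t" using s(2) root_in_verts[of s] verts_subtree by blast
    moreover have "verts t \<in> comps E (S - {r})" using search_tree_NodeD(3)[OF assms(1)] t(1) by blast
    ultimately show False by (auto dest: comps_subset)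
  qed
  then show ?thesis using s(3) by auto
qed

lemma child_of_in_child:
  assumes st: "search_tree E S (Node r ts)" and "symp_on S E"
    and t: "t \<in> set ts" "x \<in> verts t" and "child_of (Node r ts) x y"
  shows "child_of t x y"
proof -
  obtain s where s: "s \<in> set (subtrees (Node r ts))" "root s = x" "y \<in> root ` set (children s)"
    using assms(5) unfolding child_of_def by blast
  have distinct: "distinct (map verts ts)" and children: "verts ` set ts = comps E (S - {r})"
    using search_tree_NodeD[OF st] by simp_all
  have sym: "symp_on (S - {r}) E" using \<open>symp_on S E\<close> by (rule symp_on_subset) blast
  have "s \<noteq> Node r ts" using s(2) t children comps_subset by fastforce
  then obtain t' where t': "t' \<in> set ts" "s \<in> set (subtrees t')" using s(1) by auto
  then have "x \<in> verts t'" using s(2) root_in_verts[of s] verts_subtree by blast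
  then have "verts t' = verts t" using comps_eqI[OF sym] children t t' by blast
  then have "t' = t" using distinct t t' by (auto simp: distinct_map dest: inj_onD)
  then show ?thesis using s t' unfolding child_of_def by blast
qed

lemma child_path_descends:
  assumes st: "search_tree E S (Node r ts)" and sym: "symp_on S E" and "v 0 = r"
    and path: "\<forall>i\<in>{1..Suc p}. child_of (Node r ts) (v (i - 1)) (v i)"
  obtains t where "t \<in> set ts" "root t = v 1" "v ` {1..Suc p} \<subseteq> verts t"
    "\<forall>i\<in>{1..p}. child_of t (v i) (v (Suc i))"
proof -
  have "child_of (Node r ts) r (v 1)" using bspec[OF path, of 1] \<open>v 0 = r\<close> by simp
  then obtain t where t: "t \<in> set ts" "root t = v 1" using child_of_root[OF st] by blast
  have in_t: "v j \<in> verts t" if "j \<in> {1..Suc p}" for j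
    using that
  proof (induction j)
    case (Suc j)
    show ?case
    proof (cases "j = 0")
      case True
      then show ?thesis using t(2) root_in_verts[of t] by simp
    next
      case False
      then have "v j \<in> verts t" using Suc by simp
      moreover have "child_of (Node r ts) (v j) (v (Suc j))" using bspec[OF path, of "Suc j"] Suc.prems by simp
      ultimately have "child_of t (v j) (v (Suc j))" by (rule child_of_in_child[OF st sym t(1)])
      then show ?thesis by (rule child_of_verts)
    qed
  qed simp
  have "\<forall>i\<in>{1..p}. child_of t (v i) (v (Suc i))"
  proof
    fix i assume "i \<in> {1..p}"
    then have "v i \<in> verts t" "child_of (Node r ts) (v i) (v (Suc i))"
      using in_t bspec[OF path, of "Suc i"] by simp_all
    then show "child_of t (v i) (v (Suc i))" by (rule child_of_in_child[OF st sym t(1)])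
  qed
  moreover have "v ` {1..Suc p} \<subseteq> verts t" by (rule image_subsetI) (rule in_t)
  ultimately show thesis using that t by blast
qed

lemma centroid_tree_cost_le:
  assumes "symp_on S E" "centroid_tree E S w t" "v 0 = root t"
    "\<forall>i\<in>{1..p}. child_of t (v (i - 1)) (v i)"
  shows "cost w t \<le> (2 - 1 / 2 ^ p) * sum w S + (\<Sum>H\<in>comps E (S - v ` {0..p}). cent E H w)"
  using assms
proof (induction p arbitrary: S t v)
  case 0
  obtain r ts where t: "t = Node r ts" by (cases t)
  have ct: "centroid_tree E S w (Node r ts)" using "0.prems"(2) t by simp
  then have st: "search_tree E S (Node r ts)" unfolding centroid_tree_def by blast
  have "cost w t = sum w S + (\<Sum>t'\<in>set ts. cost w t')"
    using cost_search_tree_Node[OF st] t by simp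
  also have "\<dots> \<le> sum w S + (\<Sum>H\<in>comps E (S - {r}). cent E H w)"
    using sum_cost_children_le[OF ct order_refl] search_tree_NodeD(3)[OF st] by simp
  finally show ?case using "0.prems"(3) t by simp
next
  case (Suc p)
  obtain r ts where t: "t = Node r ts" by (cases t)
  have ct: "centroid_tree E S w (Node r ts)" using Suc.prems(2) t by simp
  then have st: "search_tree E S (Node r ts)" unfolding centroid_tree_def by blast
  have r: "v 0 = r" using Suc.prems(3) t by simp
  have "\<forall>i\<in>{1..Suc p}. child_of (Node r ts) (v (i - 1)) (v i)" using Suc.prems(4) t by simp
  then obtain t1 where t1: "t1 \<in> set ts" "root t1 = v 1" "v ` {1..Suc p} \<subseteq> verts t1"
    "\<forall>i\<in>{1..p}. child_of t1 (v i) (v (Suc i))"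
    by (rule child_path_descends[where v = v, OF st Suc.prems(1) r])
  define S1 where "S1 = verts t1"
  define P where "P = v ` {1..Suc p}"
  have S1: "S1 \<in> comps E (S - {r})"
    using search_tree_NodeD(3)[OF st] t1(1) by (auto simp: S1_def)
  have symS: "symp_on (S - {r}) E" by (rule symp_on_subset[OF Suc.prems(1)]) blast
  have symS1: "symp_on S1 E" by (rule symp_on_subset[OF symS comps_subset[OF S1]])
  have "cost w t1 \<le> (2 - 1 / 2 ^ p) * sum w S1
                      + (\<Sum>H\<in>comps E (S1 - (\<lambda>i. v (Suc i)) ` {0..p}). cent E H w)"
    by (rule Suc.IH[OF symS1 centroid_tree_child[OF ct t1(1), folded S1_def]])
      (use t1(2,4) in auto)
  moreover have "(\<lambda>i. v (Suc i)) ` {0..p} = P"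
    unfolding P_def image_image[of v Suc, symmetric] image_Suc_atLeastAtMost by simp
  ultimately have IH: "cost w t1 \<le> (2 - 1 / 2 ^ p) * sum w S1 + (\<Sum>H\<in>comps E (S1 - P). cent E H w)"
    by simp
  have centroid: "(2 - 1 / 2 ^ p) * sum w S1 \<le> (2 - 1 / 2 ^ p) * (sum w S / 2)"
  proof (rule mult_left_mono[OF centroid_tree_comps_weight_le[OF ct S1]])
    have "(1::real) / 2 ^ p \<le> 1" by simp
    then show "0 \<le> (2 - 1 / 2 ^ p :: real)" by linarith
  qed
  have cost: "cost w t \<le> sum w S + cost w t1 + (\<Sum>H\<in>comps E (S - {r}) - {S1}. cent E H w)"
    using cost_Node_le[OF ct t1(1)] t by (simp add: S1_def)
  have "{0..Suc p} = insert 0 {1..Suc p}" by auto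
  then have removed: "S - v ` {0..Suc p} = (S - {r}) - P" using r by (auto simp: P_def)
  have split: "(\<Sum>H\<in>comps E ((S - {r}) - P). cent E H w)
      = (\<Sum>H\<in>comps E (S1 - P). cent E H w) + (\<Sum>H\<in>comps E (S - {r}) - {S1}. cent E H w)"
    using search_tree_verts[OF st] finite_verts[of "Node r ts"] t1(3)
    by (intro sum_comps_Diff_subset_component[OF _ symS S1]) (auto simp: P_def S1_def)
  have "sum w S + (2 - 1 / 2 ^ p) * (sum w S / 2) = (2 - 1 / 2 ^ Suc p) * sum w S"
    by (simp add: field_simps)
  then show ?case unfolding removed split using cost IH centroid by linarith
qed

theorem lemma5:
  fixes E :: "'a \<Rightarrow> 'a \<Rightarrow> bool" and V :: "'a set" and w :: "'a \<Rightarrow> real"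
    and C :: "'a rtree" and p :: nat and v :: "nat \<Rightarrow> 'a"
  assumes "is_tree E V"
    and "\<forall>x\<in>V. w x \<ge> 0"
    and "centroid_tree E V w C"
    and "cost w C = cent E V w"
    and "v 0 = root C"
    and "\<forall>i\<in>{1..p}. child_of C (v (i - 1)) (v i)"
  shows "cent E V w \<le> (2 - 1 / 2 ^ p) * sum w V
           + (\<Sum>H\<in>comps E (V - v ` {0..p}). cent E H w)"
proof -
  have "symp_on V E" using assms(1) unfolding is_tree_def symp_on_def by blast
  then show ?thesis
    using centroid_tree_cost_le[OF _ assms(3,5,6)] assms(4) by simp
qed

end
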